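(* Let $(X,d_X)$ be a complete metric space and let $\{E_t\}_{t\in\mathbb{R}}$ be a locally uniformly compact family of nonempty compact subsets of $X$. Then there exists a nonempty compact set $E\subset X$ with $\lim_{t\to\infty}\operatorname{dist}(E_t,E)=0$ if and only if $\{E_t\}_{t\in\mathbb{R}}$ is forward compact, i.e. there is a compact set $K\subset X$ with $\bigcup_{t\geq0}E_t\subset K$.
   Context: A family $\{E_t\}_{t\in\mathbb{R}}$ of nonempty compact sets is locally uniformly compact if for every bounded interval $I\subset\mathbb{R}$ the union $\bigcup_{t\in I}E_t$ is precompact. $\operatorname{dist}(A,B)=\sup_{a\in A}\inf_{b\in B}d_X(a,b)$ is the Hausdorff semi-metric. *)

theory Defs
  imports "HOL-Analysis.Analysis"
begin

definition hsemidist :: "'a::metric_space set \<Rightarrow> 'a set \<Rightarrow> real" where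
  "hsemidist A B = (SUP a\<in>A. infdist a B)"

definition precompact :: "'a::metric_space set \<Rightarrow> bool" where
  "precompact S \<longleftrightarrow> compact (closure S)"

definition locally_uniformly_compact :: "(real \<Rightarrow> 'a::metric_space set) \<Rightarrow> bool" where
  "locally_uniformly_compact E \<longleftrightarrow>
     (\<forall>I. bounded I \<longrightarrow> precompact (\<Union>t\<in>I. E t))"

definition forward_compact :: "(real \<Rightarrow> 'a::metric_space set) \<Rightarrow> bool" where
  "forward_compact E \<longleftrightarrow> (\<exists>K. compact K \<and> (\<Union>t\<in>{0..}. E t) \<subseteq> K)"

end

theory Submission
  imports Defs
begin

text \<open>If the family eventually lies within \<open>\<epsilon>\<close> of the compact limit set \<open>C\<close>, then the whole
  forward orbit lies within \<open>\<epsilon>\<close> of the compact set \<open>C \<union> closure (\<Union>t\<in>{0..T}. E t)\<close>, by local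
  uniform compactness. A set that is within every \<open>\<epsilon>\<close> of some compact set is totally bounded,
  so in a complete space its closure is compact. Conversely, if the forward orbit lies in a
  compact \<open>K\<close>, the semi-distance to \<open>K\<close> vanishes for all \<open>t \<ge> 0\<close>.\<close>

lemma infdist_less_imp_ex_dist_less:
  assumes "A \<noteq> {}" "infdist x A < e"
  shows "\<exists>a\<in>A. dist x a < e"
proof -
  have "bdd_below ((\<lambda>a. dist x a) ` A)"
    by (rule bdd_belowI[of _ 0]) auto
  then show ?thesis
    using assms by (simp add: infdist_notempty cINF_less_iff)
qed

lemma compact_closure_if_totally_bounded:
  fixes S :: "'a::complete_space set"
  assumes "\<And>e. e > 0 \<Longrightarrow> \<exists>k. finite k \<and> S \<subseteq> (\<Union>x\<in>k. ball x e)"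
  shows "compact (closure S)"
  unfolding compact_eq_totally_bounded
proof (intro conjI allI impI)
  show "complete (closure S)"
    by (simp add: complete_eq_closed)
  fix e :: real
  assume "e > 0"
  then obtain k where "finite k" and k: "S \<subseteq> (\<Union>x\<in>k. ball x (e/2))"
    using assms[of "e/2"] by auto
  have "S \<subseteq> (\<Union>x\<in>k. cball x (e/2))"
    using k by (meson SUP_mono' ball_subset_cball order_trans)
  then have "closure S \<subseteq> (\<Union>x\<in>k. cball x (e/2))"
    using \<open>finite k\<close> by (intro closure_minimal) auto
  also have "\<dots> \<subseteq> (\<Union>x\<in>k. ball x e)"
    using \<open>e > 0\<close> by (intro SUP_mono') (auto simp: subset_eq)
  finally show "\<exists>k. finite k \<and> closure S \<subseteq> (\<Union>x\<in>k. ball x e)"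
    using \<open>finite k\<close> by blast
qed

lemma compact_closure_if_approx_by_compact:
  fixes S :: "'a::complete_space set"
  assumes "\<And>e. e > 0 \<Longrightarrow> \<exists>K. compact K \<and> K \<noteq> {} \<and> (\<forall>x\<in>S. infdist x K < e)"
  shows "compact (closure S)"
proof (rule compact_closure_if_totally_bounded)
  fix e :: real
  assume "e > 0"
  then obtain K where "compact K" "K \<noteq> {}" and near: "\<forall>x\<in>S. infdist x K < e/2"
    using assms[of "e/2"] by auto
  have "e/2 > 0"
    using \<open>e > 0\<close> by simp
  with \<open>compact K\<close> obtain k where "finite k" and k: "K \<subseteq> (\<Union>y\<in>k. ball y (e/2))"
    unfolding compact_eq_totally_bounded by blast
  have "S \<subseteq> (\<Union>y\<in>k. ball y e)"
  proof
    fix x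
    assume "x \<in> S"
    then obtain z where "z \<in> K" "dist x z < e/2"
      using near infdist_less_imp_ex_dist_less[OF \<open>K \<noteq> {}\<close>] by blast
    moreover from \<open>z \<in> K\<close> k obtain y where "y \<in> k" "dist y z < e/2"
      by auto
    ultimately have "dist y x < e"
      using dist_triangle2[of y x z] by linarith
    with \<open>y \<in> k\<close> show "x \<in> (\<Union>y\<in>k. ball y e)"
      by auto
  qed
  with \<open>finite k\<close> show "\<exists>k. finite k \<and> S \<subseteq> (\<Union>x\<in>k. ball x e)"
    by blast
qed

lemma infdist_le_hsemidist:
  assumes "compact S" "a \<in> S"
  shows "infdist a C \<le> hsemidist S C"
proof -
  have "compact ((\<lambda>x. infdist x C) ` S)"
    using assms(1) by (intro compact_continuous_image continuous_on_infdist continuous_on_id)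
  then have "bdd_above ((\<lambda>x. infdist x C) ` S)"
    by (intro bounded_imp_bdd_above compact_imp_bounded)
  then show ?thesis
    unfolding hsemidist_def using assms(2) by (rule cSUP_upper2) simp
qed

lemma hsemidist_eq_0_if_subset:
  assumes "A \<noteq> {}" "A \<subseteq> B"
  shows "hsemidist A B = 0"
proof -
  have "(\<lambda>a. infdist a B) ` A = {0}"
    using assms by (auto simp: image_iff subset_eq)
  then show ?thesis
    unfolding hsemidist_def by simp
qed

lemma hsemidist_tendsto_0_imp_near_compact:
  fixes E :: "real \<Rightarrow> 'a::metric_space set"
  assumes "\<And>t. compact (E t)" "locally_uniformly_compact E"
    and "compact C" "C \<noteq> {}" and lim: "((\<lambda>t. hsemidist (E t) C) \<longlongrightarrow> 0) at_top"
    and "e > 0"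
  obtains K where "compact K" "K \<noteq> {}" "\<And>t x. t \<ge> 0 \<Longrightarrow> x \<in> E t \<Longrightarrow> infdist x K < e"
proof -
  have "\<forall>\<^sub>F t in at_top. hsemidist (E t) C < e"
    using lim \<open>e > 0\<close> by (rule order_tendstoD)
  then obtain T where T: "\<And>t. t \<ge> T \<Longrightarrow> hsemidist (E t) C < e"
    unfolding eventually_at_top_linorder by blast
  define K where "K = C \<union> closure (\<Union>t\<in>{0..T}. E t)"
  have "compact (closure (\<Union>t\<in>{0..T}. E t))"
    using assms(2) unfolding locally_uniformly_compact_def precompact_def by simp
  with assms(3) have "compact K"
    unfolding K_def by (rule compact_Un)
  moreover have "K \<noteq> {}"
    unfolding K_def using assms(4) by simp
  moreover have "infdist x K < e" if "t \<ge> 0" "x \<in> E t" for t x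
  proof (cases "t \<le> T")
    case True
    with that have "x \<in> (\<Union>t\<in>{0..T}. E t)"
      by auto
    then have "x \<in> K"
      unfolding K_def by (rule closure_subset[THEN subsetD, THEN UnI2])
    with \<open>e > 0\<close> show ?thesis
      by simp
  next
    case False
    have "infdist x K \<le> infdist x C"
      unfolding K_def using assms(4) by (intro infdist_mono) auto
    also have "\<dots> \<le> hsemidist (E t) C"
      using assms(1) \<open>x \<in> E t\<close> by (rule infdist_le_hsemidist)
    also have "\<dots> < e"
      using T False by simp
    finally show ?thesis .
  qed
  ultimately show ?thesis
    using that by blast
qed

lemma forward_compact_if_hsemidist_tendsto_0:
  fixes E :: "real \<Rightarrow> 'a::complete_space set"
  assumes "\<And>t. compact (E t)" "locally_uniformly_compact E"
    and "compact C" "C \<noteq> {}" and "((\<lambda>t. hsemidist (E t) C) \<longlongrightarrow> 0) at_top"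
  shows "forward_compact E"
proof -
  define U where "U = (\<Union>t\<in>{0..}. E t)"
  have "\<exists>K. compact K \<and> K \<noteq> {} \<and> (\<forall>x\<in>U. infdist x K < e)" if "e > 0" for e
  proof -
    obtain K where "compact K" "K \<noteq> {}" and near: "\<And>t x. t \<ge> 0 \<Longrightarrow> x \<in> E t \<Longrightarrow> infdist x K < e"
      using hsemidist_tendsto_0_imp_near_compact[OF assms \<open>e > 0\<close>] by blast
    moreover have "\<forall>x\<in>U. infdist x K < e"
      unfolding U_def using near by auto
    ultimately show ?thesis
      by blast
  qed
  then have "compact (closure U)"
    by (rule compact_closure_if_approx_by_compact)
  with closure_subset[of U] show ?thesis
    unfolding forward_compact_def U_def by blast
qed

lemma hsemidist_tendsto_0_if_forward_compact:
  fixes E :: "real \<Rightarrow> 'a::metric_space set"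
  assumes "\<And>t. E t \<noteq> {}" "(\<Union>t\<in>{0..}. E t) \<subseteq> K"
  shows "((\<lambda>t. hsemidist (E t) K) \<longlongrightarrow> 0) at_top"
proof (rule tendsto_eventually, rule eventually_at_top_linorderI)
  fix t :: real
  assume "0 \<le> t"
  with assms(2) have "E t \<subseteq> K"
    by blast
  with assms(1) show "hsemidist (E t) K = 0"
    by (rule hsemidist_eq_0_if_subset)
qed

theorem proposition3p2:
  fixes E :: "real \<Rightarrow> 'a::complete_space set"
  assumes "\<And>t. compact (E t)" and "\<And>t. E t \<noteq> {}"
    and "locally_uniformly_compact E"
  shows "(\<exists>C. compact C \<and> C \<noteq> {} \<and> ((\<lambda>t. hsemidist (E t) C) \<longlongrightarrow> 0) at_top)
         \<longleftrightarrow> forward_compact E"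
proof
  assume "\<exists>C. compact C \<and> C \<noteq> {} \<and> ((\<lambda>t. hsemidist (E t) C) \<longlongrightarrow> 0) at_top"
  then obtain C where "compact C" "C \<noteq> {}" "((\<lambda>t. hsemidist (E t) C) \<longlongrightarrow> 0) at_top"
    by blast
  then show "forward_compact E"
    by (rule forward_compact_if_hsemidist_tendsto_0[OF assms(1,3)])
next
  assume "forward_compact E"
  then obtain K where "compact K" and K: "(\<Union>t\<in>{0..}. E t) \<subseteq> K"
    unfolding forward_compact_def by blast
  have "E 0 \<subseteq> K"
    using K by auto
  with assms(2) have "K \<noteq> {}"
    by blast
  moreover have "((\<lambda>t. hsemidist (E t) K) \<longlongrightarrow> 0) at_top"
    using assms(2) K by (rule hsemidist_tendsto_0_if_forward_compact)
  ultimately show "\<exists>C. compact C \<and> C \<noteq> {} \<and> ((\<lambda>t. hsemidist (E t) C) \<longlongrightarrow> 0) at_top"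
    using \<open>compact K\<close> by blast
qed

end
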